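(* Let $X$ be a set and let $\mathcal{L}$ be a nest on $X$. Then $\mathcal{L}$ is interlocking if and only if, for each $L \in \mathcal{L}$ such that $L$ is closed in the Alexandroff topology determined by $\triangleleft_{\mathcal{L}}$, the set $X-L$ is closed in the Alexandroff topology determined by $\triangleleft_{\mathcal{L}^c}$.
   Context: A nest on $X$ is a family $\mathcal{L}$ of subsets of $X$ such that for all $M,N\in\mathcal{L}$, either $M\subseteq N$ or $N\subseteq M$. For a family $\mathcal{S}$ of subsets of $X$, define the relation $x \triangleleft_{\mathcal{S}} y$ iff there exists $S\in\mathcal{S}$ with $x\in S$ and $y\notin S$. Let $\mathcal{L}^c=\{X-L : L\in\mathcal{L}\}$. A family $\mathcal{S}$ of subsets of $X$ is interlocking if for every $T\in\mathcal{S}$ with $T=\bigcap\{S : T\subseteq S,\ S\in\mathcal{S}-\{T\}\}$ one has $T=\bigcup\{S : S\subseteq T,\ S\in\mathcal{S}-\{T\}\}$. For a relation $\triangleleft$ on $X$ and $A\subseteq X$, let ${\uparrow}A=\{x\in X : \exists y\in A,\ y\triangleleft x\}$. The Alexandroff topology determined by $\triangleleft$ is the family $\{U\subseteq X : U={\uparrow}U\}$ (these are the open sets); a set is closed if its complement is open. *)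

theory Defs
  imports Main
begin

definition nest :: "'a set \<Rightarrow> 'a set set \<Rightarrow> bool" where
  "nest X \<L> \<longleftrightarrow> (\<forall>M\<in>\<L>. M \<subseteq> X) \<and> (\<forall>M\<in>\<L>. \<forall>N\<in>\<L>. M \<subseteq> N \<or> N \<subseteq> M)"

definition rel_of :: "'a set set \<Rightarrow> 'a \<Rightarrow> 'a \<Rightarrow> bool" where
  "rel_of \<S> x y \<longleftrightarrow> (\<exists>S\<in>\<S>. x \<in> S \<and> y \<notin> S)"

definition compl_fam :: "'a set \<Rightarrow> 'a set set \<Rightarrow> 'a set set" where
  "compl_fam X \<L> = (\<lambda>L. X - L) ` \<L>"

text \<open>Intersections are taken relative to X (empty intersection = X).\<close>
definition interlocking :: "'a set \<Rightarrow> 'a set set \<Rightarrow> bool" where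
  "interlocking X \<S> \<longleftrightarrow>
    (\<forall>T\<in>\<S>. T = X \<inter> \<Inter>{S. S \<in> \<S> - {T} \<and> T \<subseteq> S}
       \<longrightarrow> T = \<Union>{S. S \<in> \<S> - {T} \<and> S \<subseteq> T})"

definition up_set :: "'a set \<Rightarrow> ('a \<Rightarrow> 'a \<Rightarrow> bool) \<Rightarrow> 'a set \<Rightarrow> 'a set" where
  "up_set X R A = {x\<in>X. \<exists>y\<in>A. R y x}"

definition alex_open :: "'a set \<Rightarrow> ('a \<Rightarrow> 'a \<Rightarrow> bool) \<Rightarrow> 'a set \<Rightarrow> bool" where
  "alex_open X R U \<longleftrightarrow> U \<subseteq> X \<and> U = up_set X R U"

definition alex_closed :: "'a set \<Rightarrow> ('a \<Rightarrow> 'a \<Rightarrow> bool) \<Rightarrow> 'a set \<Rightarrow> bool" where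
  "alex_closed X R C \<longleftrightarrow> C \<subseteq> X \<and> alex_open X R (X - C)"

end

theory Submission
  imports Defs
begin

text \<open>In a nest, a point outside L lies in the up-closure of X - L exactly when it escapes some
  strict superset of L in the nest. So L is closed for the order of the nest iff it is the
  intersection of its strict supersets, and (by De Morgan) X - L is closed for the order of the
  complemented nest iff L is the union of its strict subsets. Interlocking asks precisely that the
  first condition imply the second.\<close>

lemma nest_up_set_Diff:
  assumes "nest X \<L>" and "L \<in> \<L>"
  shows "up_set X (rel_of \<L>) (X - L) = X - \<Inter>{S. S \<in> \<L> - {L} \<and> L \<subseteq> S}"
proof
  have comparable: "\<And>M. M \<in> \<L> \<Longrightarrow> M \<subseteq> L \<or> L \<subseteq> M"
    using assms unfolding nest_def by blast
  show "up_set X (rel_of \<L>) (X - L) \<subseteq> X - \<Inter>{S. S \<in> \<L> - {L} \<and> L \<subseteq> S}"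
  proof
    fix x assume "x \<in> up_set X (rel_of \<L>) (X - L)"
    then obtain y M where "x \<in> X" "y \<notin> L" "M \<in> \<L>" "y \<in> M" "x \<notin> M"
      unfolding up_set_def rel_of_def by blast
    moreover from this have "L \<subseteq> M" "M \<noteq> L" using comparable by blast+
    ultimately show "x \<in> X - \<Inter>{S. S \<in> \<L> - {L} \<and> L \<subseteq> S}" by blast
  qed
  show "X - \<Inter>{S. S \<in> \<L> - {L} \<and> L \<subseteq> S} \<subseteq> up_set X (rel_of \<L>) (X - L)"
  proof
    fix x assume "x \<in> X - \<Inter>{S. S \<in> \<L> - {L} \<and> L \<subseteq> S}"
    then obtain M where M: "x \<in> X" "M \<in> \<L>" "M \<noteq> L" "L \<subseteq> M" "x \<notin> M" by blast
    then obtain y where "y \<in> M" "y \<notin> L" by blast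
    moreover have "M \<subseteq> X" using assms M unfolding nest_def by blast
    ultimately show "x \<in> up_set X (rel_of \<L>) (X - L)"
      using M unfolding up_set_def rel_of_def by blast
  qed
qed

lemma nest_alex_closed_iff:
  assumes "nest X \<L>" and "L \<in> \<L>"
  shows "alex_closed X (rel_of \<L>) L \<longleftrightarrow> L = X \<inter> \<Inter>{S. S \<in> \<L> - {L} \<and> L \<subseteq> S}"
proof -
  have "L \<subseteq> X" using assms unfolding nest_def by blast
  then show ?thesis
    unfolding alex_closed_def alex_open_def nest_up_set_Diff[OF assms] by blast
qed

lemma nest_compl_fam: "nest X \<L> \<Longrightarrow> nest X (compl_fam X \<L>)"
  unfolding nest_def compl_fam_def by blast

lemma compl_fam_supersets_Inter:
  assumes "\<forall>M\<in>\<L>. M \<subseteq> X" and "L \<subseteq> X"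
  shows "X \<inter> \<Inter>{S. S \<in> compl_fam X \<L> - {X - L} \<and> X - L \<subseteq> S}
    = X - \<Union>{S. S \<in> \<L> - {L} \<and> S \<subseteq> L}"
proof -
  have strict_super_iff: "X - M \<noteq> X - L \<and> X - L \<subseteq> X - M \<longleftrightarrow> M \<noteq> L \<and> M \<subseteq> L"
    if "M \<in> \<L>" for M
    using assms that by (auto simp: double_diff)
  show ?thesis
  proof (intro equalityI subsetI)
    fix x assume x: "x \<in> X \<inter> \<Inter>{S. S \<in> compl_fam X \<L> - {X - L} \<and> X - L \<subseteq> S}"
    have "x \<notin> M" if M: "M \<in> \<L>" "M \<noteq> L" "M \<subseteq> L" for M
    proof -
      have "X - M \<in> compl_fam X \<L>" using M(1) unfolding compl_fam_def by blast
      moreover have "X - M \<noteq> X - L" "X - L \<subseteq> X - M" using strict_super_iff[OF M(1)] M by simp_all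
      ultimately show ?thesis using x by blast
    qed
    then show "x \<in> X - \<Union>{S. S \<in> \<L> - {L} \<and> S \<subseteq> L}" using x by blast
  next
    fix x assume x: "x \<in> X - \<Union>{S. S \<in> \<L> - {L} \<and> S \<subseteq> L}"
    have "x \<in> T" if T: "T \<in> compl_fam X \<L>" "T \<noteq> X - L" "X - L \<subseteq> T" for T
    proof -
      obtain M where M: "M \<in> \<L>" "T = X - M" using T(1) unfolding compl_fam_def by blast
      then have "M \<noteq> L" "M \<subseteq> L" using strict_super_iff[OF M(1)] T by simp_all
      then show ?thesis using x M by blast
    qed
    then show "x \<in> X \<inter> \<Inter>{S. S \<in> compl_fam X \<L> - {X - L} \<and> X - L \<subseteq> S}" using x by blast
  qed
qed

theorem theorem3p4:
  fixes X :: "'a set" and \<L> :: "'a set set"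
  assumes "nest X \<L>"
  shows "interlocking X \<L> \<longleftrightarrow>
    (\<forall>L\<in>\<L>. alex_closed X (rel_of \<L>) L \<longrightarrow>
       alex_closed X (rel_of (compl_fam X \<L>)) (X - L))"
proof -
  have subsets: "\<forall>M\<in>\<L>. M \<subseteq> X" using assms unfolding nest_def by blast
  have "alex_closed X (rel_of (compl_fam X \<L>)) (X - L) \<longleftrightarrow> L = \<Union>{S. S \<in> \<L> - {L} \<and> S \<subseteq> L}"
    if "L \<in> \<L>" for L
  proof -
    have "L \<subseteq> X" using subsets that by blast
    have "X - L \<in> compl_fam X \<L>" using that unfolding compl_fam_def by blast
    then have "alex_closed X (rel_of (compl_fam X \<L>)) (X - L) \<longleftrightarrow>
        X - L = X \<inter> \<Inter>{S. S \<in> compl_fam X \<L> - {X - L} \<and> X - L \<subseteq> S}"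
      by (rule nest_alex_closed_iff[OF nest_compl_fam[OF assms]])
    also have "\<dots> \<longleftrightarrow> X - L = X - \<Union>{S. S \<in> \<L> - {L} \<and> S \<subseteq> L}"
      unfolding compl_fam_supersets_Inter[OF subsets \<open>L \<subseteq> X\<close>] ..
    also have "\<dots> \<longleftrightarrow> L = \<Union>{S. S \<in> \<L> - {L} \<and> S \<subseteq> L}"
      using \<open>L \<subseteq> X\<close> by blast
    finally show ?thesis .
  qed
  then show ?thesis
    unfolding interlocking_def using nest_alex_closed_iff[OF assms] by simp
qed

end
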